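(* Let $\mathfrak d$ be a delta operator and let $\mathcal Z=(z_i)_{i\ge0}$, $\mathcal Z'=(z'_i)_{i\ge0}$ be grids such that, for a given $k\in\mathbb N$, $z_k\neq z'_k$ and $z_i=z'_i$ for all $i\neq k$. Then $t_n(x;\mathfrak d,\mathcal Z')=t_n(x;\mathfrak d,\mathcal Z)$ for $n\le k$, and for $n>k$, $$t_n(x;\mathfrak d,\mathcal Z')=t_n(x;\mathfrak d,\mathcal Z)-\binom nk\,t_{n-k}(z'_k;\mathfrak d,\mathcal Z^{(k)})\,t_k(x;\mathfrak d,\mathcal Z).$$
   Context: $\mathbb K$ is a field of characteristic zero; a delta operator is a linear operator $\mathfrak d$ on $\mathbb K[x]$ commuting with all shifts $E_a:f(x)\mapsto f(x+a)$ and with $\mathfrak d(x)$ a nonzero constant. $\varepsilon_z$ is evaluation at $z$. A grid is a sequence in $\mathbb K$; $\mathcal Z^{(k)}=(z_{i+k})_{i\ge0}$. $t_n(x;\mathfrak d,\mathcal Z)$ denotes the $n$-th term of the generalized Gončarov basis associated with $(\mathfrak d,\mathcal Z)$, i.e. the unique sequence $(t_n)_{n\ge0}$ with $\deg t_n=n$ and $\varepsilon_{z_i}(\mathfrak d^{\,i}(t_n))=n!\,\delta_{i,n}$ for all $i,n$. *)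

theory Defs
  imports "HOL-Computational_Algebra.Polynomial"
begin

definition shift_op :: "'a::comm_ring_1 \<Rightarrow> 'a poly \<Rightarrow> 'a poly" where
  "shift_op a f = pcompose f [:a, 1:]"

definition delta_operator :: "('a::field poly \<Rightarrow> 'a poly) \<Rightarrow> bool" where
  "delta_operator d \<longleftrightarrow>
     (\<forall>p q. d (p + q) = d p + d q) \<and>
     (\<forall>c p. d (smult c p) = smult c (d p)) \<and>
     (\<forall>a p. d (shift_op a p) = shift_op a (d p)) \<and>
     (\<exists>c. c \<noteq> 0 \<and> d [:0, 1:] = [:c:])"

definition goncarov_basis ::
    "('a::field_char_0 poly \<Rightarrow> 'a poly) \<Rightarrow> (nat \<Rightarrow> 'a) \<Rightarrow> nat \<Rightarrow> 'a poly" where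
  "goncarov_basis d z =
     (THE t. (\<forall>n. degree (t n) = n) \<and>
             (\<forall>i n. poly ((d ^^ i) (t n)) (z i) = (if i = n then fact n else 0)))"

definition grid_shift :: "nat \<Rightarrow> (nat \<Rightarrow> 'a) \<Rightarrow> nat \<Rightarrow> 'a" where
  "grid_shift k z = (\<lambda>i. z (i + k))"

end

theory Submission
  imports Defs
begin

text \<open>
  A delta operator lowers degrees by exactly one: commuting with shifts forces
  \<open>d(x^n) = \<Sum>\<^sub>j (n choose j) d(x^j)(0) x^(n-j)\<close>, whose top coefficient is \<open>n d(x) \<noteq> 0\<close>.
  Hence \<open>d^i p\<close> vanishes for \<open>i > deg p\<close>, the values \<open>d^i p (z\<^sub>i)\<close> determine \<open>p\<close>, and
  \<open>d^k t\<^sub>n(x; Z) = n!/(n-k)! t\<^sub>n\<^sub>-\<^sub>k(x; Z^(k))\<close>. Moving the node \<open>z\<^sub>k\<close> only affects the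
  \<open>k\<close>-th interpolation condition. For \<open>n \<le> k\<close> it still holds because \<open>d^k t\<^sub>n\<close> is constant;
  for \<open>n > k\<close> it is restored by subtracting the right multiple of \<open>t\<^sub>k\<close>, which meets all
  other conditions with value \<open>0\<close> and has \<open>d^k t\<^sub>k = k!\<close>.
\<close>

lemma shift_op_monom:
  "shift_op (a::'a::{idom, ring_char_0}) (monom 1 n) =
     (\<Sum>j\<le>n. smult (of_nat (n choose j) * a ^ (n - j)) (monom 1 j))"
proof (rule poly_ext)
  fix x
  have "poly (shift_op a (monom 1 n)) x = (x + a) ^ n"
    by (simp add: shift_op_def poly_pcompose poly_monom add.commute)
  also have "\<dots> = (\<Sum>j\<le>n. of_nat (n choose j) * x ^ j * a ^ (n - j))"
    by (rule binomial_ring)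
  finally show "poly (shift_op a (monom 1 n)) x =
      poly (\<Sum>j\<le>n. smult (of_nat (n choose j) * a ^ (n - j)) (monom 1 j)) x"
    by (simp add: poly_sum poly_monom mult_ac)
qed

definition is_goncarov_poly ::
    "('a::field_char_0 poly \<Rightarrow> 'a poly) \<Rightarrow> (nat \<Rightarrow> 'a) \<Rightarrow> nat \<Rightarrow> 'a poly \<Rightarrow> bool" where
  "is_goncarov_poly d z n p \<longleftrightarrow>
     degree p = n \<and> (\<forall>i. poly ((d ^^ i) p) (z i) = (if i = n then fact n else 0))"

locale delta_op =
  fixes d :: "'a::field_char_0 poly \<Rightarrow> 'a poly"
  assumes delta_operator: "delta_operator d"
begin

lemma delta_add: "d (p + q) = d p + d q"
  and delta_smult: "d (smult c p) = smult c (d p)"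
  and delta_shift: "d (shift_op a p) = shift_op a (d p)"
  using delta_operator unfolding delta_operator_def by blast+

lemma delta_x: obtains c where "c \<noteq> 0" "d [:0, 1:] = [:c:]"
  using delta_operator unfolding delta_operator_def by blast

lemma delta_0: "d 0 = 0"
  using delta_add[of 0 0] by simp

lemma delta_diff: "d (p - q) = d p - d q"
  using delta_add[of "p - q" q] by simp

lemma delta_sum: "d (\<Sum>j\<in>A. f j) = (\<Sum>j\<in>A. d (f j))"
  by (induction A rule: infinite_finite_induct) (simp_all add: delta_0 delta_add)

lemma delta_const: "d [:b:] = 0"
proof -
  obtain c where c: "d [:0, 1:] = [:c:]" by (rule delta_x)
  have "shift_op 1 [:0, 1:] = [:0, 1:] + [:1:]"
    by (simp add: shift_op_def pcompose_pCons)
  then have "[:c:] + d [:1:] = d (shift_op 1 [:0, 1:])"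
    using c by (metis delta_add)
  also have "\<dots> = [:c:]"
    using c by (simp only: delta_shift) (simp add: shift_op_def)
  finally have "d [:1:] = 0" by simp
  then show ?thesis
    using delta_smult[of b "[:1:]"] by simp
qed

lemma delta_degree_0: "degree p = 0 \<Longrightarrow> d p = 0"
  by (metis degree_eq_zeroE delta_const)

lemma delta_monom:
  assumes "n \<ge> 1"
  shows "d (monom 1 n) \<noteq> 0 \<and> degree (d (monom 1 n)) = n - 1"
proof -
  obtain c where c: "c \<noteq> 0" "d [:0, 1:] = [:c:]" by (rule delta_x)
  define e where "e j = poly (d (monom 1 j)) 0" for j
  define Q where "Q = (\<Sum>j\<le>n. monom (of_nat (n choose j) * e j) (n - j))"
  have "poly (d (monom 1 n)) a = poly Q a" for a
  proof -
    \<comment> \<open>evaluate \<open>E\<^sub>a (d x\<^sup>n) = d (E\<^sub>a x\<^sup>n)\<close> at \<open>0\<close>\<close>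
    have "poly (shift_op a (d (monom 1 n))) 0 =
        poly (\<Sum>j\<le>n. smult (of_nat (n choose j) * a ^ (n - j)) (d (monom 1 j))) 0"
      by (simp flip: delta_shift add: shift_op_monom delta_sum delta_smult)
    then show ?thesis
      by (simp add: shift_op_def poly_pcompose poly_sum Q_def e_def poly_monom mult_ac)
  qed
  then have Q: "d (monom 1 n) = Q" by (rule poly_ext)
  have e0: "e 0 = 0" using delta_const[of 1] by (simp add: e_def pCons_one)
  have e1: "e 1 = c" using c by (simp add: e_def monom_Suc monom_0)
  have coeff_Q: "coeff Q m = (\<Sum>j\<le>n. if n - j = m then of_nat (n choose j) * e j else 0)" for m
    by (simp add: Q_def coeff_sum coeff_monom)
  have "coeff Q m = 0" if "m \<ge> n" for m
    unfolding coeff_Q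
  proof (intro sum.neutral ballI)
    fix j assume "j \<in> {..n}"
    then show "(if n - j = m then of_nat (n choose j) * e j else 0) = 0"
      using that assms e0 by (cases "j = 0") auto
  qed
  then have "degree Q \<le> n - 1"
    using assms by (intro degree_le) auto
  moreover have "coeff Q (n - 1) = of_nat n * c"
  proof -
    have "coeff Q (n - 1) = (\<Sum>j\<le>n. if j = 1 then of_nat (n choose j) * e j else 0)"
      unfolding coeff_Q using assms by (intro sum.cong) auto
    then show ?thesis using assms e1 by simp
  qed
  then have top: "coeff Q (n - 1) \<noteq> 0" using c assms by simp
  ultimately show ?thesis
    using Q le_degree[OF top] by auto
qed

lemma degree_delta: "degree (d p) = degree p - 1"
  and delta_eq_0_iff: "d p = 0 \<longleftrightarrow> degree p = 0"
proof -
  have "degree (d p) = degree p - 1 \<and> (d p = 0 \<longleftrightarrow> degree p = 0)"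
  proof (induction "degree p" arbitrary: p rule: less_induct)
    case less
    show ?case
    proof (cases "degree p = 0")
      case True
      then show ?thesis using delta_degree_0 by simp
    next
      case False
      define m where "m = degree p"
      define r where "r = p - monom (lead_coeff p) m"
      have "lead_coeff p \<noteq> 0" using False by auto
      then have top: "smult (lead_coeff p) (d (monom 1 m)) \<noteq> 0"
          "degree (smult (lead_coeff p) (d (monom 1 m))) = m - 1"
        using delta_monom[of m] False m_def by auto
      have "p = smult (lead_coeff p) (monom 1 m) + r"
        by (simp add: r_def smult_monom)
      then have dp: "d p = smult (lead_coeff p) (d (monom 1 m)) + d r"
        by (metis delta_add delta_smult)
      have "degree r < m"
        using False by (intro degree_lessI) (auto simp: r_def m_def coeff_eq_0 coeff_monom)
      then have IH: "degree (d r) = degree r - 1" "d r = 0 \<longleftrightarrow> degree r = 0"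
        using less m_def by blast+
      show ?thesis
      proof (cases "degree r = 0")
        case True
        then show ?thesis using IH dp top False m_def by simp
      next
        case False
        then have "degree (d r) < m - 1" using IH \<open>degree r < m\<close> by simp
        then have "degree (d p) = m - 1" using dp top by (simp add: degree_add_eq_left)
        moreover have "m - 1 > 0" using False \<open>degree r < m\<close> by simp
        ultimately show ?thesis using m_def by auto
      qed
    qed
  qed
  then show "degree (d p) = degree p - 1" "d p = 0 \<longleftrightarrow> degree p = 0" by blast+
qed

lemma delta_surj: "\<exists>p. d p = q"
proof (induction "degree q" arbitrary: q rule: less_induct)
  case less
  show ?case
  proof (cases "q = 0")
    case True
    then show ?thesis using delta_0 by blast
  next
    case False
    define m where "m = degree q"
    define b where "b = d (monom 1 (Suc m))"
    have b: "b \<noteq> 0" "degree b = m" using delta_monom[of "Suc m"] b_def by auto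
    define p\<^sub>1 where "p\<^sub>1 = smult (lead_coeff q / lead_coeff b) (monom 1 (Suc m))"
    define q' where "q' = q - d p\<^sub>1"
    have q': "q' = q - smult (lead_coeff q / lead_coeff b) b"
      by (simp add: q'_def p\<^sub>1_def delta_smult b_def)
    have "coeff q' j = 0" if "j \<ge> m" for j
    proof (cases "j = m")
      case True
      have "coeff b m \<noteq> 0" using b by (metis leading_coeff_0_iff)
      then show ?thesis using True b by (simp add: q' m_def)
    next
      case False
      then show ?thesis using b that by (simp add: q' m_def coeff_eq_0)
    qed
    then have "degree q' < degree q" if "q' \<noteq> 0"
      using that m_def by (intro degree_lessI) auto
    then obtain p\<^sub>2 where "d p\<^sub>2 = q'"
      using less delta_0 by (cases "q' = 0") blast+
    then have "d (p\<^sub>1 + p\<^sub>2) = q" by (simp add: delta_add q'_def)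
    then show ?thesis by blast
  qed
qed

lemma degree_iter: "degree ((d ^^ i) p) = degree p - i"
  by (induction i) (simp_all add: degree_delta)

lemma iter_diff: "(d ^^ i) (p - q) = (d ^^ i) p - (d ^^ i) q"
  by (induction i) (simp_all add: delta_diff)

lemma iter_smult: "(d ^^ i) (smult c p) = smult c ((d ^^ i) p)"
  by (induction i) (simp_all add: delta_smult)

lemma iter_0: "(d ^^ i) 0 = 0"
  using iter_smult[of i 0 0] by simp

lemma iter_eq_0: "degree p < i \<Longrightarrow> (d ^^ i) p = 0"
proof (induction i)
  case (Suc i)
  then show ?case
    using degree_iter[of i p] by (cases "degree p < i") (simp_all add: delta_0 delta_degree_0)
qed simp

lemma iter_neq_0: "p \<noteq> 0 \<Longrightarrow> i \<le> degree p \<Longrightarrow> (d ^^ i) p \<noteq> 0"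
  by (induction i) (auto simp: delta_eq_0_iff degree_iter)

lemma poly_eq_by_iter_evals:
  assumes "\<And>i. poly ((d ^^ i) p) (z i) = poly ((d ^^ i) q) (z i)"
  shows "p = q"
proof (rule ccontr)
  assume "p \<noteq> q"
  define m where "m = degree (p - q)"
  have "(d ^^ m) (p - q) \<noteq> 0" "degree ((d ^^ m) (p - q)) = 0"
    using \<open>p \<noteq> q\<close> iter_neq_0 degree_iter m_def by simp_all
  moreover have "poly ((d ^^ m) (p - q)) (z m) = 0"
    using assms[of m] by (simp add: iter_diff)
  ultimately show False by (auto elim: degree_eq_zeroE)
qed

lemma is_goncarov_poly_unique:
  "is_goncarov_poly d z n p \<Longrightarrow> is_goncarov_poly d z n q \<Longrightarrow> p = q"
  unfolding is_goncarov_poly_def by (rule poly_eq_by_iter_evals[where z = z]) simp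

lemma is_goncarov_poly_exists: "\<exists>p. is_goncarov_poly d z n p"
proof (induction n arbitrary: z)
  case 0
  have "(d ^^ i) [:1:] = (if i = 0 then [:1:] else 0)" for i
    by (induction i) (auto simp: delta_const delta_0)
  then have "is_goncarov_poly d z 0 [:1:]"
    by (simp add: is_goncarov_poly_def)
  then show ?case by blast
next
  case (Suc n)
  \<comment> \<open>antidifferentiate \<open>(n + 1) t\<^sub>n\<close> for the grid \<open>z \<circ> Suc\<close>, then fix the constant by \<open>p(z\<^sub>0) = 0\<close>\<close>
  obtain q where q: "is_goncarov_poly d (z \<circ> Suc) n q" using Suc.IH by blast
  obtain p\<^sub>0 where p\<^sub>0: "d p\<^sub>0 = smult (of_nat (Suc n)) q" using delta_surj by blast
  define p where "p = p\<^sub>0 - [:poly p\<^sub>0 (z 0):]"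
  have dp: "d p = smult (of_nat (Suc n)) q"
    by (simp add: p_def delta_diff delta_const p\<^sub>0)
  have "poly ((d ^^ n) q) (z (Suc n)) = fact n"
    using q by (simp add: is_goncarov_poly_def)
  then have "q \<noteq> 0" by (auto simp: iter_0)
  then have "degree p = Suc n"
    using dp q degree_delta[of p] delta_eq_0_iff[of p]
    by (auto simp: is_goncarov_poly_def simp del: of_nat_Suc)
  moreover have "poly ((d ^^ i) p) (z i) = (if i = Suc n then fact (Suc n) else 0)" for i
  proof (cases i)
    case 0
    then show ?thesis by (simp add: p_def)
  next
    case (Suc j)
    then show ?thesis
      using q by (simp add: funpow_Suc_right dp iter_smult is_goncarov_poly_def del: funpow.simps)
  qed
  ultimately have "is_goncarov_poly d z (Suc n) p"
    by (simp add: is_goncarov_poly_def)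
  then show ?case by blast
qed

lemma is_goncarov_poly_goncarov_basis: "is_goncarov_poly d z n (goncarov_basis d z n)"
proof -
  define t where "t n = (SOME p. is_goncarov_poly d z n p)" for n
  have t: "is_goncarov_poly d z n (t n)" for n
    unfolding t_def using is_goncarov_poly_exists by (rule someI_ex)
  have "goncarov_basis d z = t"
    unfolding goncarov_basis_def
  proof (rule the_equality)
    fix t' assume "(\<forall>n. degree (t' n) = n) \<and>
      (\<forall>i n. poly ((d ^^ i) (t' n)) (z i) = (if i = n then fact n else 0))"
    then show "t' = t"
      using t is_goncarov_poly_unique unfolding is_goncarov_poly_def by blast
  qed (use t in \<open>auto simp: is_goncarov_poly_def\<close>)
  then show ?thesis using t by simp
qed

lemma goncarov_basis_eqI: "is_goncarov_poly d z n p \<Longrightarrow> goncarov_basis d z n = p"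
  using is_goncarov_poly_goncarov_basis is_goncarov_poly_unique by blast

lemma degree_goncarov_basis: "degree (goncarov_basis d z n) = n"
  using is_goncarov_poly_goncarov_basis by (simp add: is_goncarov_poly_def)

lemma poly_iter_goncarov_basis:
  "poly ((d ^^ i) (goncarov_basis d z n)) (z i) = (if i = n then fact n else 0)"
  using is_goncarov_poly_goncarov_basis by (simp add: is_goncarov_poly_def)

lemma iter_goncarov_basis_ge:
  assumes "n \<le> i"
  shows "(d ^^ i) (goncarov_basis d z n) = (if i = n then [:fact n:] else 0)"
proof (cases "i = n")
  case True
  then obtain c where "(d ^^ i) (goncarov_basis d z n) = [:c:]"
    using degree_iter degree_goncarov_basis by (metis degree_eq_zeroE diff_self_eq_0)
  then show ?thesis
    using poly_iter_goncarov_basis[of i z n] True by simp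
qed (use assms iter_eq_0 degree_goncarov_basis in simp)

lemma iter_goncarov_basis:
  assumes "k \<le> n"
  shows "(d ^^ k) (goncarov_basis d z n) =
           smult (fact n / fact (n - k)) (goncarov_basis d (grid_shift k z) (n - k))"
proof -
  define s :: 'a where "s = fact (n - k) / fact n"
  have "is_goncarov_poly d (grid_shift k z) (n - k) (smult s ((d ^^ k) (goncarov_basis d z n)))"
    unfolding is_goncarov_poly_def
  proof (intro conjI allI)
    show "degree (smult s ((d ^^ k) (goncarov_basis d z n))) = n - k"
      by (simp add: s_def degree_iter degree_goncarov_basis)
    fix i
    have "(d ^^ i) ((d ^^ k) p) = (d ^^ (i + k)) p" for p
      by (simp add: funpow_add)
    then show "poly ((d ^^ i) (smult s ((d ^^ k) (goncarov_basis d z n)))) (grid_shift k z i) =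
        (if i = n - k then fact (n - k) else 0)"
      using assms poly_iter_goncarov_basis[of "i + k" z n]
      by (auto simp: iter_smult grid_shift_def s_def)
  qed
  then show ?thesis
    by (simp add: goncarov_basis_eqI s_def)
qed

lemma goncarov_basis_grid_update_le:
  assumes "\<And>i. i \<noteq> k \<Longrightarrow> z i = z' i" and "n \<le> k"
  shows "goncarov_basis d z' n = goncarov_basis d z n"
proof (rule goncarov_basis_eqI)
  have "poly ((d ^^ i) (goncarov_basis d z n)) (z' i) = (if i = n then fact n else 0)" for i
    using assms iter_goncarov_basis_ge[of n k z] poly_iter_goncarov_basis[of i z n]
    by (cases "i = k") auto
  then show "is_goncarov_poly d z' n (goncarov_basis d z n)"
    by (simp add: is_goncarov_poly_def degree_goncarov_basis)
qed

lemma goncarov_basis_grid_update_gt: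
  assumes "\<And>i. i \<noteq> k \<Longrightarrow> z i = z' i" and "k < n"
  shows "goncarov_basis d z' n = goncarov_basis d z n
           - smult (of_nat (n choose k) * poly (goncarov_basis d (grid_shift k z) (n - k)) (z' k))
                   (goncarov_basis d z k)"
    (is "_ = ?t n - smult ?c (?t k)")
proof (rule goncarov_basis_eqI)
  have "degree (- smult ?c (?t k)) < degree (?t n)"
    using assms le_less_trans[OF degree_smult_le] by (simp add: degree_goncarov_basis)
  then have "degree (?t n - smult ?c (?t k)) = n"
    using degree_add_eq_left by (fastforce simp: degree_goncarov_basis)
  moreover have "poly ((d ^^ i) (?t n - smult ?c (?t k))) (z' i) = (if i = n then fact n else 0)" for i
  proof (cases "i = k")
    case True
    have "poly ((d ^^ k) (?t n)) (z' k) =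
        fact n / fact (n - k) * poly (goncarov_basis d (grid_shift k z) (n - k)) (z' k)"
      using assms by (simp add: iter_goncarov_basis)
    also have "\<dots> = ?c * fact k"
      using assms by (subst fact_binomial[symmetric]) (simp_all add: mult_ac)
    finally have "poly ((d ^^ k) (?t n)) (z' k) = ?c * fact k" .
    then show ?thesis
      using True assms by (simp add: iter_diff iter_smult iter_goncarov_basis_ge)
  next
    case False
    then show ?thesis
      using assms poly_iter_goncarov_basis[of i z] by (simp add: iter_diff iter_smult)
  qed
  ultimately show "is_goncarov_poly d z' n (?t n - smult ?c (?t k))"
    by (simp add: is_goncarov_poly_def)
qed

end

theorem mainTheorem12:
  fixes d :: "'a::field_char_0 poly \<Rightarrow> 'a poly"
    and z z' :: "nat \<Rightarrow> 'a" and k :: nat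
  assumes "delta_operator d"
    and "z k \<noteq> z' k"
    and "\<And>i. i \<noteq> k \<Longrightarrow> z i = z' i"
  shows "(\<forall>n\<le>k. goncarov_basis d z' n = goncarov_basis d z n) \<and>
         (\<forall>n>k. goncarov_basis d z' n =
                  goncarov_basis d z n
                  - smult (of_nat (n choose k) * poly (goncarov_basis d (grid_shift k z) (n - k)) (z' k))
                          (goncarov_basis d z k))"
proof -
  interpret delta_op d by standard (rule assms(1))
  show ?thesis
    using goncarov_basis_grid_update_le goncarov_basis_grid_update_gt assms(3) by blast
qed

end
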